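(* Let $q$ be a prime power and let $C\subseteq\mathrm{GF}(q^m)^n$ be a (linear or nonlinear) code with $n\le m$, $|C|=q^{mk}$ for an integer $1\le k\le n$, and minimum rank distance $d_{\mathrm R}=n-k+1$. Let $k\le v\le n$, let $\mathbf B$ be a $v\times n$ matrix and $\bar{\mathbf B}$ an $(n-v)\times n$ matrix over $\mathrm{GF}(q)$ such that the matrix obtained by stacking $\mathbf B$ above $\bar{\mathbf B}$ is invertible, and let $\mathcal V,\bar{\mathcal V}$ be their $\mathrm{GF}(q^m)$-row spans. Then the restriction $C_{\mathcal V}=\{r_{\mathcal V}(\mathbf c):\mathbf c\in C\}\subseteq\mathrm{GF}(q^m)^v$ is a code of length $v$ and cardinality $q^{mk}$ with minimum rank distance $v-k+1$ (i.e., an MRD code).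
   Context: For a vector $\mathbf x$ over $\mathrm{GF}(q^m)$, $\mathrm{rk}(\mathbf x)$ is the dimension over $\mathrm{GF}(q)$ of the $\mathrm{GF}(q)$-span of its coordinates; the minimum rank distance of a code is the minimum of $\mathrm{rk}(\mathbf c-\mathbf d)$ over distinct codewords. Every $\mathbf x\in\mathrm{GF}(q^m)^n$ decomposes uniquely as $\mathbf x=\mathbf a\mathbf B+\mathbf b\bar{\mathbf B}$ with $\mathbf a\in\mathrm{GF}(q^m)^v$, $\mathbf b\in\mathrm{GF}(q^m)^{n-v}$; here $\mathbf a\mathbf B=\mathbf x_{\mathcal V}$ is the projection of $\mathbf x$ onto $\mathcal V$ along $\bar{\mathcal V}$, and $r_{\mathcal V}(\mathbf x)=\mathbf a$ (equivalently $\mathbf x_{\mathcal V}\mathbf B^{-R}$ for a right inverse $\mathbf B^{-R}$ of $\mathbf B$). *)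

theory Defs
  imports Main
begin

text \<open>The big field GF(q^m) is a finite field type 'k; the small field GF(q) is a
  subfield F of it. Vectors of length n are functions nat => 'k vanishing from index n on;
  matrices are functions nat => nat => 'k (only indices below the sizes matter).\<close>

definition is_subfield :: "'k::field set \<Rightarrow> bool" where
  "is_subfield F \<longleftrightarrow> 0 \<in> F \<and> 1 \<in> F \<and>
     (\<forall>x\<in>F. \<forall>y\<in>F. x + y \<in> F \<and> x * y \<in> F) \<and>
     (\<forall>x\<in>F. - x \<in> F \<and> inverse x \<in> F)"

definition vecs :: "nat \<Rightarrow> (nat \<Rightarrow> 'k::zero) set" where
  "vecs n = {x. \<forall>i\<ge>n. x i = 0}"

definition F_span :: "'k::field set \<Rightarrow> 'k set \<Rightarrow> 'k set" where
  "F_span F A = {(\<Sum>a\<in>T. c a * a) | T c. finite T \<and> T \<subseteq> A \<and> (\<forall>a\<in>T. c a \<in> F)}"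

definition F_indep :: "'k::field set \<Rightarrow> 'k set \<Rightarrow> bool" where
  "F_indep F S \<longleftrightarrow> finite S \<and>
     (\<forall>c. (\<forall>s\<in>S. c s \<in> F) \<and> (\<Sum>s\<in>S. c s * s) = 0 \<longrightarrow> (\<forall>s\<in>S. c s = 0))"

definition F_dim :: "'k::{field,finite} set \<Rightarrow> 'k set \<Rightarrow> nat" where
  "F_dim F V = Max {card S | S. S \<subseteq> V \<and> F_indep F S}"

definition rk :: "'k::{field,finite} set \<Rightarrow> nat \<Rightarrow> (nat \<Rightarrow> 'k) \<Rightarrow> nat" where
  "rk F n x = F_dim F (F_span F {x i | i. i < n})"

definition min_rank_dist :: "'k::{field,finite} set \<Rightarrow> nat \<Rightarrow> (nat \<Rightarrow> 'k) set \<Rightarrow> nat" where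
  "min_rank_dist F n C = Min {rk F n (\<lambda>i. c i - d i) | c d. c \<in> C \<and> d \<in> C \<and> c \<noteq> d}"

definition vecmat :: "nat \<Rightarrow> nat \<Rightarrow> (nat \<Rightarrow> 'k::comm_ring_1) \<Rightarrow> (nat \<Rightarrow> nat \<Rightarrow> 'k) \<Rightarrow> (nat \<Rightarrow> 'k)" where
  "vecmat r n a M = (\<lambda>j. if j < n then (\<Sum>i<r. a i * M i j) else 0)"

definition mat_over :: "'k set \<Rightarrow> nat \<Rightarrow> nat \<Rightarrow> (nat \<Rightarrow> nat \<Rightarrow> 'k) \<Rightarrow> bool" where
  "mat_over F r n M \<longleftrightarrow> (\<forall>i<r. \<forall>j<n. M i j \<in> F)"

definition stack :: "nat \<Rightarrow> (nat \<Rightarrow> nat \<Rightarrow> 'k) \<Rightarrow> (nat \<Rightarrow> nat \<Rightarrow> 'k) \<Rightarrow> (nat \<Rightarrow> nat \<Rightarrow> 'k)" where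
  "stack v B Bbar = (\<lambda>i j. if i < v then B i j else Bbar (i - v) j)"

definition mat_mult :: "nat \<Rightarrow> (nat \<Rightarrow> nat \<Rightarrow> 'k::comm_ring_1) \<Rightarrow> (nat \<Rightarrow> nat \<Rightarrow> 'k) \<Rightarrow> (nat \<Rightarrow> nat \<Rightarrow> 'k)" where
  "mat_mult n M N = (\<lambda>i j. \<Sum>l<n. M i l * N l j)"

definition invertible_over :: "'k::comm_ring_1 set \<Rightarrow> nat \<Rightarrow> (nat \<Rightarrow> nat \<Rightarrow> 'k) \<Rightarrow> bool" where
  "invertible_over F n M \<longleftrightarrow> (\<exists>N. mat_over F n n N \<and>
     (\<forall>i<n. \<forall>j<n. mat_mult n M N i j = (if i = j then 1 else 0)) \<and>
     (\<forall>i<n. \<forall>j<n. mat_mult n N M i j = (if i = j then 1 else 0)))"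

definition r_V :: "nat \<Rightarrow> nat \<Rightarrow> (nat \<Rightarrow> nat \<Rightarrow> 'k::comm_ring_1) \<Rightarrow> (nat \<Rightarrow> nat \<Rightarrow> 'k)
                   \<Rightarrow> (nat \<Rightarrow> 'k) \<Rightarrow> (nat \<Rightarrow> 'k)" where
  "r_V v n B Bbar x = (THE a. a \<in> vecs v \<and>
      (\<exists>b\<in>vecs (n - v). (\<forall>j. x j = vecmat v n a B j + vecmat (n - v) n b Bbar j)))"

end

theory Submission
  imports Defs "HOL-Library.FuncSet" "HOL-Library.Set_Algebras"
begin

(* An F-subspace of GF(q^m) of dimension r has exactly q^r elements, so ranks can be compared
   by counting: rank is subadditive and cannot grow under multiplication by a matrix over F.
   Writing c - d = (r_V c - r_V d) B + (b - b') Bbar shows that restriction to V loses at most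
   n - v of the rank, so distinct codewords, at rank distance at least n - k + 1, have restrictions
   at rank distance at least v - k + 1 > 0. Hence r_V is injective on C, and by pigeonhole two of
   the q^(mk) restrictions agree on their first k - 1 coordinates, so the distance v - k + 1 is
   attained (the Singleton bound). *)

definition F_subspace :: "'k::field set \<Rightarrow> 'k set \<Rightarrow> bool" where
  "F_subspace F W \<longleftrightarrow> 0 \<in> W \<and> (\<forall>x\<in>W. \<forall>y\<in>W. x + y \<in> W) \<and> (\<forall>a\<in>F. \<forall>x\<in>W. a * x \<in> W)"

lemma subfield_closed:
  assumes "is_subfield F"
  shows "0 \<in> F" "1 \<in> F"
    and "x \<in> F \<Longrightarrow> y \<in> F \<Longrightarrow> x * y \<in> F"
    and "x \<in> F \<Longrightarrow> y \<in> F \<Longrightarrow> x - y \<in> F"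
    and "x \<in> F \<Longrightarrow> y \<in> F \<Longrightarrow> - x / y \<in> F"
proof -
  have add_mult: "\<forall>x\<in>F. \<forall>y\<in>F. x + y \<in> F \<and> x * y \<in> F"
    and uminus_inverse: "\<forall>x\<in>F. - x \<in> F \<and> inverse x \<in> F"
    using assms unfolding is_subfield_def by blast+
  show "0 \<in> F" "1 \<in> F" using assms unfolding is_subfield_def by blast+
  show "x * y \<in> F" if "x \<in> F" "y \<in> F" using add_mult that by blast
  show "x - y \<in> F" if "x \<in> F" "y \<in> F"
    using add_mult uminus_inverse that by (metis diff_conv_add_uminus)
  show "- x / y \<in> F" if "x \<in> F" "y \<in> F"
    using add_mult uminus_inverse that by (metis divide_inverse)
qed

lemma card_subfield_ge_2:
  fixes F :: "'k::{field,finite} set"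
  assumes "is_subfield F"
  shows "2 \<le> card F"
proof -
  have "{0, 1} \<subseteq> F" using subfield_closed(1,2)[OF assms] by simp
  then show ?thesis using card_mono[OF finite, of "{0, 1 :: 'k}" F] by simp
qed

lemma F_subspace_sum:
  assumes "F_subspace F W" "\<And>i. i \<in> I \<Longrightarrow> f i \<in> W"
  shows "sum f I \<in> W"
  using assms(2)
  by (induction I rule: infinite_finite_induct) (use assms(1) in \<open>simp_all add: F_subspace_def\<close>)

lemma F_subspace_lincomb:
  assumes "F_subspace F W" "\<And>i. i \<in> I \<Longrightarrow> c i \<in> F" "\<And>i. i \<in> I \<Longrightarrow> g i \<in> W"
  shows "(\<Sum>i\<in>I. c i * g i) \<in> W"
  using assms unfolding F_subspace_def by (intro F_subspace_sum[OF assms(1)]) blast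

lemma F_subspace_set_plus:
  assumes "F_subspace F U" "F_subspace F W"
  shows "F_subspace F (U + W)"
  unfolding F_subspace_def
proof (intro conjI ballI)
  show "0 \<in> U + W" using assms unfolding F_subspace_def by (metis add_0 set_plus_intro)
next
  fix x y assume "x \<in> U + W" "y \<in> U + W"
  then obtain u w u' w' where uw: "x = u + w" "y = u' + w'" "u \<in> U" "w \<in> W" "u' \<in> U" "w' \<in> W"
    by (auto elim!: set_plus_elim)
  then have "u + u' \<in> U" "w + w' \<in> W" using assms unfolding F_subspace_def by blast+
  then have "(u + u') + (w + w') \<in> U + W" by (rule set_plus_intro)
  moreover have "x + y = (u + u') + (w + w')" using uw(1,2) by (simp add: algebra_simps)
  ultimately show "x + y \<in> U + W" by simp
next
  fix a x assume "a \<in> F" "x \<in> U + W"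
  then obtain u w where "x = u + w" "u \<in> U" "w \<in> W" by (auto elim!: set_plus_elim)
  moreover have "a * u \<in> U" "a * w \<in> W" using calculation assms \<open>a \<in> F\<close> unfolding F_subspace_def by blast+
  ultimately show "a * x \<in> U + W" by (simp add: distrib_left set_plus_intro)
qed

lemma card_set_plus_le:
  fixes U W :: "'a::{plus,finite} set"
  shows "card (U + W) \<le> card U * card W"
  unfolding set_plus_image card_cartesian_product[symmetric] by (rule card_image_le) simp

lemma F_span_superset:
  assumes "is_subfield F"
  shows "X \<subseteq> F_span F X"
proof
  fix x assume "x \<in> X"
  then show "x \<in> F_span F X" unfolding F_span_def
    by (intro CollectI exI[of _ "{x}"] exI[of _ "\<lambda>_. 1"]) (simp add: subfield_closed[OF assms])
qed

lemma coordinate_in_F_span: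
  assumes "is_subfield F" "i < n"
  shows "x i \<in> F_span F {x j | j. j < n}"
  using assms F_span_superset[OF assms(1), of "{x j | j. j < n}"] by blast

lemma F_span_least:
  assumes "F_subspace F W" "X \<subseteq> W"
  shows "F_span F X \<subseteq> W"
proof
  fix x assume "x \<in> F_span F X"
  then obtain T c where "x = (\<Sum>a\<in>T. c a * a)" "T \<subseteq> X" "\<forall>a\<in>T. c a \<in> F"
    unfolding F_span_def by blast
  then show "x \<in> W" using assms(2) by (auto intro!: F_subspace_lincomb[OF assms(1)])
qed

lemma F_span_eq_lincomb:
  assumes "is_subfield F" "finite X"
  shows "F_span F X = (\<lambda>c. \<Sum>a\<in>X. c a * a) ` (X \<rightarrow>\<^sub>E F)"
proof
  show "(\<lambda>c. \<Sum>a\<in>X. c a * a) ` (X \<rightarrow>\<^sub>E F) \<subseteq> F_span F X"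
    unfolding F_span_def using assms(2) by blast
next
  show "F_span F X \<subseteq> (\<lambda>c. \<Sum>a\<in>X. c a * a) ` (X \<rightarrow>\<^sub>E F)"
  proof
    fix x assume "x \<in> F_span F X"
    then obtain T c where x: "x = (\<Sum>a\<in>T. c a * a)" "T \<subseteq> X" "\<forall>a\<in>T. c a \<in> F"
      unfolding F_span_def by auto
    define c' where "c' = (\<lambda>a\<in>X. if a \<in> T then c a else 0)"
    have "c' \<in> X \<rightarrow>\<^sub>E F" using x(3) subfield_closed(1)[OF assms(1)] by (auto simp: c'_def)
    moreover have "x = (\<Sum>a\<in>X. c' a * a)"
      unfolding x(1) c'_def by (rule sum.mono_neutral_cong_left) (use x(2) assms(2) in auto)
    ultimately show "x \<in> (\<lambda>c. \<Sum>a\<in>X. c a * a) ` (X \<rightarrow>\<^sub>E F)" by blast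
  qed
qed

lemma F_subspace_F_span:
  fixes X :: "'k::{field,finite} set"
  assumes "is_subfield F"
  shows "F_subspace F (F_span F X)"
  unfolding F_subspace_def F_span_eq_lincomb[OF assms finite]
proof (intro conjI ballI)
  show "0 \<in> (\<lambda>c. \<Sum>a\<in>X. c a * a) ` (X \<rightarrow>\<^sub>E F)"
    using subfield_closed(1)[OF assms]
    by (intro image_eqI[of _ _ "\<lambda>a\<in>X. 0"]) (auto intro: sum.neutral)
next
  fix x y assume "x \<in> (\<lambda>c. \<Sum>a\<in>X. c a * a) ` (X \<rightarrow>\<^sub>E F)" "y \<in> (\<lambda>c. \<Sum>a\<in>X. c a * a) ` (X \<rightarrow>\<^sub>E F)"
  then obtain c d where "c \<in> X \<rightarrow>\<^sub>E F" "d \<in> X \<rightarrow>\<^sub>E F" "x = (\<Sum>a\<in>X. c a * a)" "y = (\<Sum>a\<in>X. d a * a)"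
    by blast
  then show "x + y \<in> (\<lambda>c. \<Sum>a\<in>X. c a * a) ` (X \<rightarrow>\<^sub>E F)"
    using assms unfolding is_subfield_def
    by (intro image_eqI[of _ _ "\<lambda>a\<in>X. c a + d a"]) (auto simp: sum.distrib distrib_right)
next
  fix b x assume "b \<in> F" "x \<in> (\<lambda>c. \<Sum>a\<in>X. c a * a) ` (X \<rightarrow>\<^sub>E F)"
  then obtain c where "c \<in> X \<rightarrow>\<^sub>E F" "x = (\<Sum>a\<in>X. c a * a)" by blast
  then show "b * x \<in> (\<lambda>c. \<Sum>a\<in>X. c a * a) ` (X \<rightarrow>\<^sub>E F)"
    using \<open>b \<in> F\<close> subfield_closed(3)[OF assms]
    by (intro image_eqI[of _ _ "\<lambda>a\<in>X. b * c a"]) (auto simp: sum_distrib_left mult.assoc)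
qed

lemma card_F_span_le:
  fixes X :: "'k::{field,finite} set"
  assumes "is_subfield F"
  shows "card (F_span F X) \<le> card F ^ card X"
  unfolding F_span_eq_lincomb[OF assms finite] card_funcsetE[OF finite, symmetric]
  by (rule card_image_le) (simp add: finite_PiE)

lemma F_indepD:
  assumes "F_indep F S" "\<And>s. s \<in> S \<Longrightarrow> c s \<in> F" "(\<Sum>s\<in>S. c s * s) = 0" "s \<in> S"
  shows "c s = 0"
  using assms unfolding F_indep_def by blast

lemma card_F_span_indep:
  fixes S :: "'k::{field,finite} set"
  assumes "is_subfield F" "F_indep F S"
  shows "card (F_span F S) = card F ^ card S"
proof -
  have "inj_on (\<lambda>c. \<Sum>s\<in>S. c s * s) (S \<rightarrow>\<^sub>E F)"
  proof (rule inj_onI)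
    fix c d assume c: "c \<in> S \<rightarrow>\<^sub>E F" and d: "d \<in> S \<rightarrow>\<^sub>E F"
      and "(\<Sum>s\<in>S. c s * s) = (\<Sum>s\<in>S. d s * s)"
    then have "(\<Sum>s\<in>S. (c s - d s) * s) = 0" by (simp add: left_diff_distrib sum_subtractf)
    moreover have "\<forall>s\<in>S. c s - d s \<in> F" using c d subfield_closed(4)[OF assms(1)] by auto
    ultimately have "\<forall>s\<in>S. c s - d s = 0" using F_indepD[OF assms(2), of "\<lambda>s. c s - d s"] by blast
    then show "c = d" using c d by (intro PiE_ext[OF c d]) auto
  qed
  then show ?thesis
    unfolding F_span_eq_lincomb[OF assms(1) finite] card_funcsetE[OF finite, symmetric]
    by (rule card_image)
qed

lemma F_indep_insert:
  fixes S :: "'k::{field,finite} set"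
  assumes "is_subfield F" "F_indep F S" "x \<notin> F_span F S"
  shows "F_indep F (insert x S)"
  unfolding F_indep_def
proof (intro conjI allI impI)
  show "finite (insert x S)" by simp
next
  fix c assume c: "(\<forall>s\<in>insert x S. c s \<in> F) \<and> (\<Sum>s\<in>insert x S. c s * s) = 0"
  have "x \<notin> S" using assms(3) F_span_superset[OF assms(1)] by blast
  then have sum0: "c x * x + (\<Sum>s\<in>S. c s * s) = 0" using c by simp
  have "c x = 0"
  proof (rule ccontr)
    assume "c x \<noteq> 0"
    moreover have "c x * x = - (\<Sum>s\<in>S. c s * s)" using sum0 by (simp add: eq_neg_iff_add_eq_0)
    ultimately have "x = - (\<Sum>s\<in>S. c s * s) / c x" by (simp add: field_simps)
    also have "\<dots> = (\<Sum>s\<in>S. (- c s / c x) * s)"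
      by (simp add: sum_divide_distrib sum_negf[symmetric])
    finally have "x = (\<Sum>s\<in>S. (- c s / c x) * s)" .
    moreover have "\<forall>s\<in>S. - c s / c x \<in> F" using c subfield_closed(5)[OF assms(1)] by auto
    ultimately have "x \<in> F_span F S"
      unfolding F_span_def by (intro CollectI exI[of _ S] exI[of _ "\<lambda>s. - c s / c x"]) simp
    then show False using assms(3) by blast
  qed
  then have "(\<Sum>s\<in>S. c s * s) = 0" using sum0 by simp
  moreover have "c s \<in> F" if "s \<in> S" for s using c that by simp
  ultimately have "c s = 0" if "s \<in> S" for s using F_indepD[OF assms(2) _ _ that] by blast
  then show "\<forall>s\<in>insert x S. c s = 0" using \<open>c x = 0\<close> by simp
qed

lemma F_dim_basis:
  fixes V :: "'k::{field,finite} set"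
  assumes "is_subfield F" "F_subspace F V"
  obtains S where "F_indep F S" "card S = F_dim F V" "F_span F S = V"
proof -
  let ?M = "{card S | S. S \<subseteq> V \<and> F_indep F S}"
  have fin: "finite ?M"
    by (rule finite_subset[of _ "{..card (UNIV :: 'k set)}"]) (auto intro: card_mono)
  have "F_indep F {}" unfolding F_indep_def by simp
  then have "card {} \<in> ?M" by (intro CollectI exI[of _ "{}"]) simp
  then have "F_dim F V \<in> ?M" unfolding F_dim_def using fin by (intro Max_in) auto
  then obtain S where S: "S \<subseteq> V" "F_indep F S" "card S = F_dim F V"
    unfolding mem_Collect_eq by metis
  have "V \<subseteq> F_span F S"
  proof
    fix x assume "x \<in> V"
    show "x \<in> F_span F S"
    proof (rule ccontr)
      assume x: "x \<notin> F_span F S"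
      then have "card (insert x S) \<in> ?M"
        using F_indep_insert[OF assms(1) S(2) x] \<open>x \<in> V\<close> S(1) by blast
      then have "card (insert x S) \<le> F_dim F V" unfolding F_dim_def by (rule Max_ge[OF fin])
      moreover have "x \<notin> S" using x F_span_superset[OF assms(1)] by blast
      ultimately show False using S(3) by simp
    qed
  qed
  moreover have "F_span F S \<subseteq> V" by (rule F_span_least[OF assms(2) S(1)])
  ultimately show thesis using that S(2,3) by blast
qed

lemma card_F_subspace:
  fixes V :: "'k::{field,finite} set"
  assumes "is_subfield F" "F_subspace F V"
  shows "card V = card F ^ F_dim F V"
proof -
  obtain S where "F_indep F S" "card S = F_dim F V" "F_span F S = V"
    using F_dim_basis[OF assms] .
  then show ?thesis using card_F_span_indep[OF assms(1)] by metis
qed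

lemma card_F_span_rk:
  fixes x :: "nat \<Rightarrow> 'k::{field,finite}"
  assumes "is_subfield F"
  shows "card (F_span F {x i | i. i < n}) = card F ^ rk F n x"
  unfolding rk_def by (rule card_F_subspace[OF assms F_subspace_F_span[OF assms]])

lemma subfield_power_le_imp_le_exp:
  fixes F :: "'k::{field,finite} set"
  assumes "is_subfield F" "card F ^ a \<le> card F ^ b"
  shows "a \<le> b"
  using card_subfield_ge_2[OF assms(1)] assms(2) by (simp add: power_le_imp_le_exp)

lemma card_F_pow_rk_le:
  fixes x :: "nat \<Rightarrow> 'k::{field,finite}"
  assumes "is_subfield F" "F_subspace F W" "\<And>i. i < n \<Longrightarrow> x i \<in> W"
  shows "card F ^ rk F n x \<le> card W"
proof -
  have "F_span F {x i | i. i < n} \<subseteq> W" using assms(3) by (intro F_span_least[OF assms(2)]) blast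
  then have "card (F_span F {x i | i. i < n}) \<le> card W" by (rule card_mono[OF finite])
  then show ?thesis unfolding card_F_span_rk[OF assms(1)] .
qed

lemma rk_le_of_span_subset:
  fixes x y :: "nat \<Rightarrow> 'k::{field,finite}"
  assumes "is_subfield F" "\<And>j. j < n \<Longrightarrow> x j \<in> F_span F {y i | i. i < r}"
  shows "rk F n x \<le> rk F r y"
  using card_F_pow_rk_le[OF assms(1) F_subspace_F_span[OF assms(1)] assms(2)]
  unfolding card_F_span_rk[OF assms(1)] by (rule subfield_power_le_imp_le_exp[OF assms(1)])

lemma rk_le_weight:
  fixes x :: "nat \<Rightarrow> 'k::{field,finite}"
  assumes "is_subfield F"
  shows "rk F n x \<le> card {i. i < n \<and> x i \<noteq> 0}"
proof -
  let ?J = "{i. i < n \<and> x i \<noteq> 0}"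
  have "x i \<in> F_span F (x ` ?J)" if "i < n" for i
    using that F_span_superset[OF assms, of "x ` ?J"] F_subspace_F_span[OF assms, of "x ` ?J"]
    unfolding F_subspace_def by (cases "x i = 0") auto
  then have "card F ^ rk F n x \<le> card (F_span F (x ` ?J))"
    by (rule card_F_pow_rk_le[OF assms F_subspace_F_span[OF assms]])
  also have "\<dots> \<le> card F ^ card (x ` ?J)" by (rule card_F_span_le[OF assms])
  also have "\<dots> \<le> card F ^ card ?J"
    using card_subfield_ge_2[OF assms] by (intro power_increasing card_image_le) auto
  finally show ?thesis by (rule subfield_power_le_imp_le_exp[OF assms])
qed

lemma rk_le_length:
  fixes x :: "nat \<Rightarrow> 'k::{field,finite}"
  assumes "is_subfield F"
  shows "rk F n x \<le> n"
proof -
  have "card {i. i < n \<and> x i \<noteq> 0} \<le> card {..<n}" by (rule card_mono) auto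
  then show ?thesis using rk_le_weight[OF assms, of n x] by simp
qed

lemma rk_add_le:
  fixes x y :: "nat \<Rightarrow> 'k::{field,finite}"
  assumes "is_subfield F"
  shows "rk F n (\<lambda>i. x i + y i) \<le> rk F n x + rk F n y"
proof -
  let ?X = "F_span F {x i | i. i < n}" and ?Y = "F_span F {y i | i. i < n}"
  have "card F ^ rk F n (\<lambda>i. x i + y i) \<le> card (?X + ?Y)"
  proof (rule card_F_pow_rk_le[OF assms])
    show "F_subspace F (?X + ?Y)" by (intro F_subspace_set_plus F_subspace_F_span assms)
    fix i assume "i < n"
    then have "x i \<in> ?X" "y i \<in> ?Y" by (simp_all add: coordinate_in_F_span[OF assms])
    then show "x i + y i \<in> ?X + ?Y" by (rule set_plus_intro)
  qed
  also have "\<dots> \<le> card ?X * card ?Y" by (rule card_set_plus_le)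
  also have "\<dots> = card F ^ (rk F n x + rk F n y)" by (simp add: card_F_span_rk[OF assms] power_add)
  finally show ?thesis by (rule subfield_power_le_imp_le_exp[OF assms])
qed

lemma rk_vecmat_le:
  fixes a :: "nat \<Rightarrow> 'k::{field,finite}"
  assumes "is_subfield F" "mat_over F r n M"
  shows "rk F n (vecmat r n a M) \<le> rk F r a"
proof (rule rk_le_of_span_subset[OF assms(1)])
  fix j assume "j < n"
  have "(\<Sum>i<r. M i j * a i) \<in> F_span F {a i | i. i < r}"
    using assms(2) \<open>j < n\<close> coordinate_in_F_span[OF assms(1)] unfolding mat_over_def
    by (intro F_subspace_lincomb[OF F_subspace_F_span[OF assms(1)]]) auto
  then show "vecmat r n a M j \<in> F_span F {a i | i. i < r}"
    using \<open>j < n\<close> by (simp add: vecmat_def mult.commute)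
qed

lemma exists_pair_rk_diff_le:
  fixes A :: "(nat \<Rightarrow> 'k::{field,finite}) set"
  assumes "is_subfield F" "card (UNIV :: 'k set) ^ j < card A"
  shows "\<exists>a\<in>A. \<exists>a'\<in>A. a \<noteq> a' \<and> rk F v (\<lambda>i. a i - a' i) \<le> v - j"
proof -
  let ?p = "\<lambda>a. restrict a {..<j}"
  have "card (?p ` A) \<le> card ({..<j} \<rightarrow>\<^sub>E (UNIV :: 'k set))"
    by (intro card_mono finite_PiE image_subsetI) (simp_all add: restrict_PiE_iff)
  also have "\<dots> = card (UNIV :: 'k set) ^ j" by (simp add: card_funcsetE)
  finally have "\<not> inj_on ?p A" using assms(2) card_image by fastforce
  then obtain a a' where aa': "a \<in> A" "a' \<in> A" "a \<noteq> a'" "?p a = ?p a'"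
    unfolding inj_on_def by blast
  have "a i = a' i" if "i < j" for i using fun_cong[OF aa'(4), of i] that by simp
  then have "{i. i < v \<and> a i - a' i \<noteq> 0} \<subseteq> {j..<v}" by (auto simp: not_less[symmetric])
  then have "card {i. i < v \<and> a i - a' i \<noteq> 0} \<le> v - j"
    using card_mono[of "{j..<v}"] by fastforce
  then have "rk F v (\<lambda>i. a i - a' i) \<le> v - j"
    using rk_le_weight[OF assms(1), of v "\<lambda>i. a i - a' i"] by linarith
  then show ?thesis using aa'(1-3) by blast
qed

lemma finite_rank_distances:
  fixes C :: "(nat \<Rightarrow> 'k::{field,finite}) set"
  assumes "is_subfield F"
  shows "finite {rk F n (\<lambda>i. c i - d i) | c d. c \<in> C \<and> d \<in> C \<and> c \<noteq> d}"
  by (rule finite_subset[of _ "{..n}"]) (auto simp: rk_le_length[OF assms])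

lemma min_rank_dist_le_rk:
  fixes C :: "(nat \<Rightarrow> 'k::{field,finite}) set"
  assumes "is_subfield F" "c \<in> C" "d \<in> C" "c \<noteq> d"
  shows "min_rank_dist F n C \<le> rk F n (\<lambda>i. c i - d i)"
  unfolding min_rank_dist_def
  by (rule Min_le[OF finite_rank_distances[OF assms(1)]]) (use assms in blast)

lemma le_min_rank_dist:
  fixes C :: "(nat \<Rightarrow> 'k::{field,finite}) set"
  assumes "is_subfield F" "1 < card C"
    and "\<And>c d. c \<in> C \<Longrightarrow> d \<in> C \<Longrightarrow> c \<noteq> d \<Longrightarrow> \<delta> \<le> rk F n (\<lambda>i. c i - d i)"
  shows "\<delta> \<le> min_rank_dist F n C"
proof -
  have "finite C" using assms(2) by (rule card_ge_0_finite[OF less_trans[OF zero_less_one]])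
  then obtain c d where "c \<in> C" "d \<in> C" "c \<noteq> d"
    using assms(2) card_le_Suc0_iff_eq[of C] by fastforce
  then have "{rk F n (\<lambda>i. c i - d i) | c d. c \<in> C \<and> d \<in> C \<and> c \<noteq> d} \<noteq> {}" by blast
  then show ?thesis
    unfolding min_rank_dist_def
  proof (rule Min_ge_iff[OF finite_rank_distances[OF assms(1)], THEN iffD2, rule_format])
    show "\<delta> \<le> y" if "y \<in> {rk F n (\<lambda>i. c i - d i) | c d. c \<in> C \<and> d \<in> C \<and> c \<noteq> d}" for y
      using that assms(3) by blast
  qed
qed

lemma min_rank_dist_singleton_bound:
  fixes A :: "(nat \<Rightarrow> 'k::{field,finite}) set"
  assumes "is_subfield F" "card (UNIV :: 'k set) ^ j < card A"
  shows "min_rank_dist F v A \<le> v - j"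
proof -
  obtain a a' where "a \<in> A" "a' \<in> A" "a \<noteq> a'" "rk F v (\<lambda>i. a i - a' i) \<le> v - j"
    using exists_pair_rk_diff_le[OF assms] by blast
  then show ?thesis using min_rank_dist_le_rk[OF assms(1), of a A a' v] by linarith
qed

lemma sum_lessThan_split:
  fixes f :: "nat \<Rightarrow> 'a::comm_monoid_add"
  assumes "v \<le> n"
  shows "(\<Sum>i<n. f i) = (\<Sum>i<v. f i) + (\<Sum>i<n - v. f (i + v))"
proof -
  have "(\<Sum>i<n. f i) = sum f {0..<v} + sum f {0 + v..<(n - v) + v}"
    using sum.atLeastLessThan_concat[of 0 v n f] assms by (simp add: atLeast0LessThan)
  also have "\<dots> = (\<Sum>i<v. f i) + (\<Sum>i<n - v. f (i + v))"
    by (simp only: sum.shift_bounds_nat_ivl atLeast0LessThan)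
  finally show ?thesis .
qed

lemma vecmat_stack:
  fixes y :: "nat \<Rightarrow> 'k::comm_ring_1"
  assumes "v \<le> n"
  shows "vecmat n n y (stack v B Bbar) j = vecmat v n y B j + vecmat (n - v) n (\<lambda>i. y (i + v)) Bbar j"
  unfolding vecmat_def stack_def sum_lessThan_split[OF assms] by simp

lemma vecmat_right_inverse:
  fixes y :: "nat \<Rightarrow> 'k::comm_ring_1"
  assumes "\<forall>i<n. \<forall>j<n. mat_mult n S N i j = (if i = j then 1 else 0)" "t < n"
  shows "vecmat n n (vecmat n n y S) N t = y t"
proof -
  have "vecmat n n (vecmat n n y S) N t = (\<Sum>j<n. \<Sum>i<n. y i * (S i j * N j t))"
    using assms(2) by (simp add: vecmat_def sum_distrib_right mult.assoc)
  also have "\<dots> = (\<Sum>i<n. y i * mat_mult n S N i t)"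
    unfolding mat_mult_def sum_distrib_left by (rule sum.swap)
  also have "\<dots> = (\<Sum>i<n. if i = t then y i else 0)"
    using assms by (intro sum.cong) auto
  also have "\<dots> = y t" using assms(2) by (simp add: sum.delta)
  finally show ?thesis .
qed

lemma stack_decomposition_exists:
  fixes x :: "nat \<Rightarrow> 'k::comm_ring_1"
  assumes "v \<le> n" "invertible_over F n (stack v B Bbar)" "x \<in> vecs n"
  shows "\<exists>a\<in>vecs v. \<exists>b\<in>vecs (n - v). \<forall>j. x j = vecmat v n a B j + vecmat (n - v) n b Bbar j"
proof -
  obtain N where N: "\<forall>i<n. \<forall>j<n. mat_mult n N (stack v B Bbar) i j = (if i = j then 1 else 0)"
    using assms(2) unfolding invertible_over_def by blast
  define y where "y = vecmat n n x N"
  define a where "a i = (if i < v then y i else 0)" for i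
  define b where "b i = (if i < n - v then y (i + v) else 0)" for i
  have "x j = vecmat v n a B j + vecmat (n - v) n b Bbar j" for j
  proof (cases "j < n")
    case True
    have "x j = vecmat n n y (stack v B Bbar) j"
      unfolding y_def by (rule vecmat_right_inverse[OF N True, symmetric])
    also have "\<dots> = vecmat v n a B j + vecmat (n - v) n b Bbar j"
      unfolding vecmat_stack[OF assms(1)] by (simp add: vecmat_def a_def b_def)
    finally show ?thesis .
  qed (use assms(3) in \<open>simp add: vecs_def vecmat_def\<close>)
  moreover have "a \<in> vecs v" "b \<in> vecs (n - v)" by (simp_all add: vecs_def a_def b_def)
  ultimately show ?thesis by blast
qed

lemma stack_decomposition_unique:
  fixes a a' :: "nat \<Rightarrow> 'k::comm_ring_1"
  assumes "v \<le> n" "invertible_over F n (stack v B Bbar)" "a \<in> vecs v" "a' \<in> vecs v"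
    and "\<And>j. vecmat v n a B j + vecmat (n - v) n b Bbar j
            = vecmat v n a' B j + vecmat (n - v) n b' Bbar j"
  shows "a = a'"
proof
  obtain N where N: "\<forall>i<n. \<forall>j<n. mat_mult n (stack v B Bbar) N i j = (if i = j then 1 else 0)"
    using assms(2) unfolding invertible_over_def by blast
  define y where "y i = (if i < v then a i else b (i - v))" for i
  define y' where "y' i = (if i < v then a' i else b' (i - v))" for i
  have "vecmat n n y (stack v B Bbar) = vecmat n n y' (stack v B Bbar)"
  proof
    fix j
    show "vecmat n n y (stack v B Bbar) j = vecmat n n y' (stack v B Bbar) j"
      unfolding vecmat_stack[OF assms(1)] using assms(5)[of j]
      by (cases "j < n") (simp_all add: vecmat_def y_def y'_def)
  qed
  then have y_eq: "y t = y' t" if "t < n" for t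
    using vecmat_right_inverse[OF N that] by metis
  show "a i = a' i" for i
    using y_eq[of i] assms(1,3,4) by (cases "i < v") (auto simp: y_def y'_def vecs_def)
qed

lemma r_V_decomposition:
  fixes x :: "nat \<Rightarrow> 'k::comm_ring_1"
  assumes "v \<le> n" "invertible_over F n (stack v B Bbar)" "x \<in> vecs n"
  shows "r_V v n B Bbar x \<in> vecs v \<and>
    (\<exists>b\<in>vecs (n - v). \<forall>j. x j = vecmat v n (r_V v n B Bbar x) B j + vecmat (n - v) n b Bbar j)"
proof -
  let ?P = "\<lambda>a. a \<in> vecs v \<and> (\<exists>b\<in>vecs (n - v). \<forall>j. x j = vecmat v n a B j + vecmat (n - v) n b Bbar j)"
  have "\<exists>!a. ?P a"
  proof (rule ex_ex1I)
    show "\<exists>a. ?P a" using stack_decomposition_exists[OF assms] by blast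
    show "a = a'" if "?P a" "?P a'" for a a'
      using that stack_decomposition_unique[OF assms(1,2)] by metis
  qed
  then show ?thesis unfolding r_V_def by (rule theI')
qed

lemma rk_diff_le_rk_r_V_diff:
  fixes c d :: "nat \<Rightarrow> 'k::{field,finite}"
  assumes "is_subfield F" "v \<le> n" "mat_over F v n B" "mat_over F (n - v) n Bbar"
    and "invertible_over F n (stack v B Bbar)" "c \<in> vecs n" "d \<in> vecs n"
  shows "rk F n (\<lambda>j. c j - d j)
         \<le> rk F v (\<lambda>i. r_V v n B Bbar c i - r_V v n B Bbar d i) + (n - v)"
proof -
  let ?a = "r_V v n B Bbar c" and ?a' = "r_V v n B Bbar d"
  obtain b where b: "\<forall>j. c j = vecmat v n ?a B j + vecmat (n - v) n b Bbar j"
    using r_V_decomposition[OF assms(2,5,6)] by blast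
  obtain b' where b': "\<forall>j. d j = vecmat v n ?a' B j + vecmat (n - v) n b' Bbar j"
    using r_V_decomposition[OF assms(2,5,7)] by blast
  have "(\<lambda>j. c j - d j) = (\<lambda>j. vecmat v n (\<lambda>i. ?a i - ?a' i) B j
                                + vecmat (n - v) n (\<lambda>i. b i - b' i) Bbar j)"
    using b b' by (auto simp: vecmat_def sum_subtractf left_diff_distrib)
  then have "rk F n (\<lambda>j. c j - d j) \<le> rk F n (vecmat v n (\<lambda>i. ?a i - ?a' i) B)
                                      + rk F n (vecmat (n - v) n (\<lambda>i. b i - b' i) Bbar)"
    using rk_add_le[OF assms(1)] by metis
  also have "\<dots> \<le> rk F v (\<lambda>i. ?a i - ?a' i) + rk F (n - v) (\<lambda>i. b i - b' i)"
    by (intro add_mono rk_vecmat_le assms(1,3,4))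
  also have "\<dots> \<le> rk F v (\<lambda>i. ?a i - ?a' i) + (n - v)"
    using rk_le_length[OF assms(1)] by simp
  finally show ?thesis .
qed

lemma min_rank_dist_le_rk_r_V_diff:
  fixes C :: "(nat \<Rightarrow> 'k::{field,finite}) set"
  assumes "is_subfield F" "v \<le> n" "mat_over F v n B" "mat_over F (n - v) n Bbar"
    and "invertible_over F n (stack v B Bbar)" "C \<subseteq> vecs n"
    and "c \<in> C" "d \<in> C" "c \<noteq> d"
  shows "min_rank_dist F n C
         \<le> rk F v (\<lambda>i. r_V v n B Bbar c i - r_V v n B Bbar d i) + (n - v)"
proof -
  have "min_rank_dist F n C \<le> rk F n (\<lambda>j. c j - d j)"
    by (rule min_rank_dist_le_rk[OF assms(1,7-9)])
  also have "\<dots> \<le> rk F v (\<lambda>i. r_V v n B Bbar c i - r_V v n B Bbar d i) + (n - v)"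
    using assms(6-8) by (intro rk_diff_le_rk_r_V_diff[OF assms(1-5)]) auto
  finally show ?thesis .
qed

lemma inj_on_r_V:
  fixes C :: "(nat \<Rightarrow> 'k::{field,finite}) set"
  assumes "is_subfield F" "v \<le> n" "mat_over F v n B" "mat_over F (n - v) n Bbar"
    and "invertible_over F n (stack v B Bbar)" "C \<subseteq> vecs n"
    and "n - v < min_rank_dist F n C"
  shows "inj_on (r_V v n B Bbar) C"
proof (rule inj_onI, rule ccontr)
  fix c d assume cd: "c \<in> C" "d \<in> C" "r_V v n B Bbar c = r_V v n B Bbar d" "c \<noteq> d"
  have "rk F v (\<lambda>i. r_V v n B Bbar c i - r_V v n B Bbar d i) = 0"
    using rk_le_weight[OF assms(1), of v "\<lambda>i. r_V v n B Bbar c i - r_V v n B Bbar d i"] cd(3)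
    by simp
  then show False using min_rank_dist_le_rk_r_V_diff[OF assms(1-6) cd(1,2,4)] assms(7) by simp
qed

lemma rk_diff_r_V_image_ge:
  fixes C :: "(nat \<Rightarrow> 'k::{field,finite}) set"
  assumes "is_subfield F" "v \<le> n" "mat_over F v n B" "mat_over F (n - v) n Bbar"
    and "invertible_over F n (stack v B Bbar)" "C \<subseteq> vecs n"
    and "a \<in> r_V v n B Bbar ` C" "a' \<in> r_V v n B Bbar ` C" "a \<noteq> a'"
  shows "min_rank_dist F n C - (n - v) \<le> rk F v (\<lambda>i. a i - a' i)"
proof -
  obtain c d where cd: "c \<in> C" "d \<in> C" "a = r_V v n B Bbar c" "a' = r_V v n B Bbar d"
    using assms(7,8) by blast
  then have "c \<noteq> d" using assms(9) by blast
  then have "min_rank_dist F n C \<le> rk F v (\<lambda>i. a i - a' i) + (n - v)"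
    using min_rank_dist_le_rk_r_V_diff[OF assms(1-6) cd(1,2)] cd(3,4) by simp
  then show ?thesis by simp
qed

theorem lemma7:
  fixes F :: "'k::{field,finite} set"
    and q m n k v :: nat
    and C :: "(nat \<Rightarrow> 'k) set"
    and B Bbar :: "nat \<Rightarrow> nat \<Rightarrow> 'k"
  assumes "is_subfield F" and "card F = q" and "card (UNIV :: 'k set) = q ^ m"
    and "n \<le> m" and "1 \<le> k" and "k \<le> n"
    and "C \<subseteq> vecs n" and "card C = q ^ (m * k)"
    and "min_rank_dist F n C = n - k + 1"
    and "k \<le> v" and "v \<le> n"
    and "mat_over F v n B" and "mat_over F (n - v) n Bbar"
    and "invertible_over F n (stack v B Bbar)"
  shows "r_V v n B Bbar ` C \<subseteq> vecs v
       \<and> card (r_V v n B Bbar ` C) = q ^ (m * k)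
       \<and> min_rank_dist F v (r_V v n B Bbar ` C) = v - k + 1"
proof -
  let ?R = "r_V v n B Bbar"
  have "inj_on ?R C" by (rule inj_on_r_V[OF assms(1,11-14,7)]) (use assms(9,10) in simp)
  then have card_R: "card (?R ` C) = q ^ (m * k)" using card_image assms(8) by metis
  have "1 < q" using card_subfield_ge_2[OF assms(1)] assms(2) by simp
  then have small: "card (UNIV :: 'k set) ^ (k - 1) < card (?R ` C)"
    using assms(3-6) by (simp add: card_R power_mult[symmetric])
  have "min_rank_dist F v (?R ` C) \<le> v - (k - 1)"
    by (rule min_rank_dist_singleton_bound[OF assms(1) small])
  moreover have "v - k + 1 \<le> min_rank_dist F v (?R ` C)"
  proof (rule le_min_rank_dist[OF assms(1)])
    show "1 < card (?R ` C)" unfolding card_R using \<open>1 < q\<close> assms(4-6) by (intro one_less_power) auto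
    show "v - k + 1 \<le> rk F v (\<lambda>i. a i - a' i)"
      if "a \<in> ?R ` C" "a' \<in> ?R ` C" "a \<noteq> a'" for a a'
      using rk_diff_r_V_image_ge[OF assms(1,11-14,7) that] unfolding assms(9)
      using assms(10,11) by arith
  qed
  moreover have "?R ` C \<subseteq> vecs v" using r_V_decomposition[OF assms(11,14)] assms(7) by blast
  ultimately show ?thesis using card_R assms(5,10) by simp
qed

end
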